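(* $GL(\omega)$ acts transitively on the set of dense countably dimensional linear subspaces of $\omega$: for any two dense linear subspaces $E,F\subseteq\omega$ of countably infinite Hamel dimension there is $J\in GL(\omega)$ with $J(E)=F$.
   Context: $\omega=\mathbb{K}^{\mathbb{N}}$ with the product topology, $\mathbb{K}\in\{\mathbb{R},\mathbb{C}\}$. $GL(\omega)$ is the group of continuous linear bijections of $\omega$ with continuous inverse. *)

theory Defs
  imports "HOL-Analysis.Analysis" "HOL-Library.Function_Algebras"
begin

text \<open>omega = K^N, modelled as the type nat => K; its topology is the product
  topology (the library's type-class instance for function spaces).
  Scalar multiplication is pointwise.\<close>

definition wsmul :: "'a::field \<Rightarrow> (nat \<Rightarrow> 'a) \<Rightarrow> (nat \<Rightarrow> 'a)" where
  "wsmul c x = (\<lambda>n. c * x n)"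

definition dense_countable_dim_subspace ::
    "(nat \<Rightarrow> 'a::{field, topological_space}) set \<Rightarrow> bool" where
  "dense_countable_dim_subspace E \<longleftrightarrow>
     module.subspace wsmul E \<and> closure E = UNIV \<and>
     (\<exists>B. B \<subseteq> E \<and> \<not> module.dependent wsmul B \<and> module.span wsmul B = E \<and>
          countable B \<and> infinite B)"

definition in_GL_omega :: "((nat \<Rightarrow> 'a::{field, topological_space}) \<Rightarrow> (nat \<Rightarrow> 'a)) \<Rightarrow> bool" where
  "in_GL_omega J \<longleftrightarrow>
     Vector_Spaces.linear wsmul wsmul J \<and> bij J \<and>
     continuous_on UNIV J \<and> continuous_on UNIV (inv J)"

end

theory Submission
  imports Defs
begin

(* Let phi \<subseteq> omega be the space of finitely supported sequences; it is the
   topological dual of omega via the pairing <g, x> = \<Sum>m. g m * x m.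
   Call (u, f) a biorthogonal system for E if u k \<in> E, f k \<in> phi,
   <f i, u k> = \<delta>_ik, the u k span E and every unit sequence \<delta>_j is a finite
   combination of the f i.  For such a system the coordinate map
   J x = (<f i, x>)_i is in GL(omega) and maps E onto phi: its inverse is the
   column-finite synthesis y \<mapsto> \<Sum>_i y i * u i.

   The heart of the proof is that every dense subspace E of countably infinite
   dimension has a biorthogonal system.  It is built by a back-and-forth
   Gram-Schmidt process: at even steps the next basis vector of E is absorbed,
   at odd steps the next unit sequence of phi; density of E guarantees that
   every nonzero functional in phi is nonzero somewhere on E, infinite
   dimension that E is never exhausted.  Hence every such E is mapped onto phi
   by some J \<in> GL(omega), and GL(omega) being a group gives the theorem. *)

section \<open>Omega as a vector space\<close>

lemma vector_space_wsmul: "vector_space (wsmul :: 'a::field \<Rightarrow> (nat \<Rightarrow> 'a) \<Rightarrow> _)"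
  by unfold_locales (auto simp: wsmul_def fun_eq_iff algebra_simps)

interpretation W: vector_space "wsmul :: 'a::field \<Rightarrow> (nat \<Rightarrow> 'a) \<Rightarrow> _"
  by (rule vector_space_wsmul)

lemma sum_fun_apply: "sum f A (j::nat) = (\<Sum>i\<in>A. f i j)"
  by (induct A rule: infinite_finite_induct) auto

lemma lincomb_eq_sum: "(\<lambda>j. \<Sum>i<(n::nat). a i * U i j) = (\<Sum>i<n. wsmul (a i) (U i))"
  by (simp add: fun_eq_iff sum_fun_apply wsmul_def)

lemma lincomb_in_span:
  "(\<And>i. i < (n::nat) \<Longrightarrow> U i \<in> W.span X) \<Longrightarrow> (\<lambda>j. \<Sum>i<n. a i * U i j) \<in> W.span X"
  unfolding lincomb_eq_sum by (intro W.span_sum W.span_scale) auto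

lemma lincomb_in_subspace:
  "W.subspace E \<Longrightarrow> (\<And>i. i < (n::nat) \<Longrightarrow> U i \<in> E) \<Longrightarrow> (\<lambda>j. \<Sum>i<n. a i * U i j) \<in> E"
  unfolding lincomb_eq_sum by (intro W.subspace_sum W.subspace_scale) auto

lemma diff_in_subspace: "W.subspace E \<Longrightarrow> x \<in> E \<Longrightarrow> y \<in> E \<Longrightarrow> (\<lambda>j. x j - y j) \<in> E"
  using W.subspace_diff[of E x y] by (simp add: fun_diff_def)

lemma sum_times_delta:
  assumes "i < (n::nat)" shows "(\<Sum>k<n. c k * (if i = k then 1 else 0)) = (c i :: 'a::field)"
proof -
  have "(\<Sum>k<n. c k * (if i = k then 1 else 0)) = (\<Sum>k\<in>{..<n}. if k = i then c k else 0)"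
    by (rule sum.cong) auto
  also have "\<dots> = c i" using assms by (simp add: sum.delta)
  finally show ?thesis .
qed

section \<open>GL(omega) is a group\<close>

lemma in_GL_omegaI:
  assumes "Vector_Spaces.linear wsmul wsmul J" "continuous_on UNIV J" "continuous_on UNIV K"
    and "\<And>x. K (J x) = x" "\<And>y. J (K y) = y"
  shows "in_GL_omega J"
proof -
  have "K \<circ> J = id" "J \<circ> K = id" using assms(4,5) by auto
  then have "bij J" "inv J = K" by (auto intro: o_bij inv_unique_comp)
  with assms(1-3) show ?thesis by (simp add: in_GL_omega_def)
qed

lemma in_GL_omega_inv:
  assumes "in_GL_omega J" shows "in_GL_omega (inv J)"
proof -
  have J: "Vector_Spaces.linear wsmul wsmul J" "bij J" "continuous_on UNIV J" "continuous_on UNIV (inv J)"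
    using assms by (auto simp: in_GL_omega_def)
  have "Vector_Spaces.linear wsmul wsmul (inv J)"
    using bij_module_hom_imp_inv_module_hom[of wsmul wsmul J] J(1,2) by (simp add: module_hom_iff_linear)
  then show ?thesis
    using J by (intro in_GL_omegaI[where K = J]) (auto simp: bij_is_inj bij_is_surj surj_f_inv_f)
qed

lemma in_GL_omega_comp:
  assumes J: "in_GL_omega J" and K: "in_GL_omega K" shows "in_GL_omega (K \<circ> J)"
proof (rule in_GL_omegaI[where K = "inv J \<circ> inv K"])
  show "Vector_Spaces.linear wsmul wsmul (K \<circ> J)"
    using assms by (auto simp: in_GL_omega_def intro: Vector_Spaces.linear_compose)
  have cont: "continuous_on UNIV J" "continuous_on UNIV K"
    "continuous_on UNIV (inv J)" "continuous_on UNIV (inv K)"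
    using assms by (auto simp: in_GL_omega_def)
  show "continuous_on UNIV (K \<circ> J)"
    unfolding comp_def by (rule continuous_on_compose2[OF cont(2,1)]) auto
  show "continuous_on UNIV (inv J \<circ> inv K)"
    unfolding comp_def by (rule continuous_on_compose2[OF cont(3,4)]) auto
  show "(inv J \<circ> inv K) ((K \<circ> J) x) = x" "(K \<circ> J) ((inv J \<circ> inv K) y) = y" for x y
    using assms by (auto simp: in_GL_omega_def bij_is_inj bij_is_surj surj_f_inv_f)
qed

section \<open>Finitely supported sequences and the pairing with omega\<close>

definition fsupp :: "(nat \<Rightarrow> 'a::zero) \<Rightarrow> nat set" where
  "fsupp g = {m. g m \<noteq> 0}"

definition finite_seqs :: "(nat \<Rightarrow> 'a::zero) set" where
  "finite_seqs = {g. finite (fsupp g)}"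

definition pairing :: "(nat \<Rightarrow> 'a::field) \<Rightarrow> (nat \<Rightarrow> 'a) \<Rightarrow> 'a" where
  "pairing g x = (\<Sum>m\<in>fsupp g. g m * x m)"

definition unit_seq :: "nat \<Rightarrow> nat \<Rightarrow> 'a::zero_neq_one" where
  "unit_seq j = (\<lambda>m. if m = j then 1 else 0)"

lemma finite_fsupp: "g \<in> finite_seqs \<Longrightarrow> finite (fsupp g)"
  by (simp add: finite_seqs_def)

lemma fsupp_unit_seq: "fsupp (unit_seq j) = {j}"
  by (auto simp: fsupp_def unit_seq_def)

lemma unit_seq_in_finite_seqs [simp]: "unit_seq j \<in> finite_seqs"
  by (simp add: finite_seqs_def fsupp_unit_seq)

lemma fsupp_lincomb:
  "fsupp (\<lambda>m. \<Sum>i<(n::nat). a i * (F i m :: 'a::field)) \<subseteq> (\<Union>i<n. fsupp (F i))"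
  by (auto simp: fsupp_def intro: ccontr)

lemma finite_UN_fsupp:
  "(\<And>i. i < (n::nat) \<Longrightarrow> F i \<in> finite_seqs) \<Longrightarrow> finite (\<Union>i<n. fsupp (F i))"
  by (auto simp: finite_fsupp)

lemma finite_seqs_add: "g \<in> finite_seqs \<Longrightarrow> h \<in> finite_seqs \<Longrightarrow> (\<lambda>m. g m + h m :: 'a::field) \<in> finite_seqs"
  unfolding finite_seqs_def by (auto simp: fsupp_def intro: finite_subset[of _ "fsupp g \<union> fsupp h"])

lemma finite_seqs_scale: "g \<in> finite_seqs \<Longrightarrow> (\<lambda>m. c * g m :: 'a::field) \<in> finite_seqs"
  unfolding finite_seqs_def by (auto simp: fsupp_def intro: finite_subset[of _ "fsupp g"])

lemma finite_seqs_diff: "g \<in> finite_seqs \<Longrightarrow> h \<in> finite_seqs \<Longrightarrow> (\<lambda>m. g m - h m :: 'a::field) \<in> finite_seqs"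
  unfolding finite_seqs_def by (auto simp: fsupp_def intro: finite_subset[of _ "fsupp g \<union> fsupp h"])

lemma finite_seqs_lincomb:
  "(\<And>i. i < (n::nat) \<Longrightarrow> F i \<in> finite_seqs) \<Longrightarrow> (\<lambda>m. \<Sum>i<n. a i * (F i m :: 'a::field)) \<in> finite_seqs"
  unfolding finite_seqs_def mem_Collect_eq
  by (rule finite_subset[OF fsupp_lincomb finite_UN_fsupp]) (simp add: finite_seqs_def)

lemma pairing_eq_sum:
  assumes "finite S" "fsupp g \<subseteq> S" shows "pairing g x = (\<Sum>m\<in>S. g m * x m)"
  unfolding pairing_def by (rule sum.mono_neutral_left) (use assms in \<open>auto simp: fsupp_def\<close>)

lemma pairing_unit_seq [simp]: "pairing (unit_seq j) x = x j"
  unfolding pairing_def fsupp_unit_seq by (simp add: unit_seq_def)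

lemma pairing_unit_seq_right: "g \<in> finite_seqs \<Longrightarrow> pairing g (unit_seq j) = g j"
  unfolding pairing_def unit_seq_def
  by (auto simp: finite_seqs_def fsupp_def if_distrib[of "\<lambda>x. _ * x"] cong: if_cong)

lemma pairing_zero_right [simp]: "pairing g 0 = 0"
  by (simp add: pairing_def)

lemma pairing_add_right: "pairing g (\<lambda>m. x m + y m) = pairing g x + pairing g y"
  by (simp add: pairing_def distrib_left sum.distrib)

lemma pairing_scale_right: "pairing g (\<lambda>m. c * x m) = c * pairing g x"
  by (simp add: pairing_def sum_distrib_left mult.left_commute)

lemma pairing_diff_right: "pairing g (\<lambda>m. x m - y m) = pairing g x - pairing g y"
  by (simp add: pairing_def right_diff_distrib sum_subtractf)

lemma pairing_lincomb_right:
  "pairing g (\<lambda>m. \<Sum>i<(n::nat). a i * U i m) = (\<Sum>i<n. a i * pairing g (U i))"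
proof -
  have "pairing g (\<lambda>m. \<Sum>i<n. a i * U i m) = (\<Sum>m\<in>fsupp g. \<Sum>i<n. a i * (g m * U i m))"
    unfolding pairing_def by (simp add: sum_distrib_left mult.left_commute)
  also have "\<dots> = (\<Sum>i<n. \<Sum>m\<in>fsupp g. a i * (g m * U i m))" by (rule sum.swap)
  finally show ?thesis by (simp add: pairing_def sum_distrib_left)
qed

lemma pairing_scale_left: "pairing (\<lambda>m. c * g m) x = c * pairing g x"
proof (cases "c = 0")
  case True
  then show ?thesis by (simp add: pairing_def fsupp_def)
next
  case False
  then have "fsupp (\<lambda>m. c * g m) = fsupp g" by (auto simp: fsupp_def)
  then show ?thesis by (simp add: pairing_def sum_distrib_left mult.assoc)
qed

lemma pairing_diff_left:
  assumes "g \<in> finite_seqs" "h \<in> finite_seqs"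
  shows "pairing (\<lambda>m. g m - h m) x = pairing g x - pairing h x"
proof -
  let ?S = "fsupp g \<union> fsupp h"
  have S: "finite ?S" using assms by (simp add: finite_fsupp)
  have "pairing (\<lambda>m. g m - h m) x = (\<Sum>m\<in>?S. (g m - h m) * x m)"
    by (rule pairing_eq_sum[OF S]) (auto simp: fsupp_def)
  also have "\<dots> = (\<Sum>m\<in>?S. g m * x m) - (\<Sum>m\<in>?S. h m * x m)"
    by (simp add: left_diff_distrib sum_subtractf)
  finally show ?thesis by (simp add: pairing_eq_sum[OF S])
qed

lemma pairing_lincomb_left:
  assumes "\<And>i. i < (n::nat) \<Longrightarrow> F i \<in> finite_seqs"
  shows "pairing (\<lambda>m. \<Sum>i<n. a i * F i m) x = (\<Sum>i<n. a i * pairing (F i) x)"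
proof -
  let ?S = "\<Union>i<n. fsupp (F i)"
  have S: "finite ?S" using assms by (rule finite_UN_fsupp)
  have F: "\<And>i. i < n \<Longrightarrow> pairing (F i) x = (\<Sum>m\<in>?S. F i m * x m)"
    by (rule pairing_eq_sum[OF S]) auto
  have "pairing (\<lambda>m. \<Sum>i<n. a i * F i m) x = (\<Sum>m\<in>?S. \<Sum>i<n. a i * (F i m * x m))"
    by (simp add: pairing_eq_sum[OF S fsupp_lincomb] sum_distrib_right mult.assoc)
  also have "\<dots> = (\<Sum>i<n. \<Sum>m\<in>?S. a i * (F i m * x m))" by (rule sum.swap)
  finally show ?thesis by (simp add: F sum_distrib_left)
qed

lemma continuous_pairing: "continuous_on UNIV (\<lambda>x. pairing g (x :: nat \<Rightarrow> 'a::real_normed_field))"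
  unfolding pairing_def by (intro continuous_intros continuous_on_product_coordinates)

section \<open>Biorthogonal systems yield elements of GL(omega)\<close>

locale biorthogonal_system =
  fixes E :: "(nat \<Rightarrow> 'a::real_normed_field) set" and u f :: "nat \<Rightarrow> nat \<Rightarrow> 'a"
  assumes subspace: "W.subspace E"
    and u_in_E: "\<And>k. u k \<in> E"
    and f_in_finite_seqs: "\<And>k. f k \<in> finite_seqs"
    and biorth: "\<And>i k. pairing (f i) (u k) = (if i = k then 1 else 0)"
    and E_subset_span: "E \<subseteq> W.span (range u)"
    and unit_seq_lincomb: "\<And>j. \<exists>(N::nat) a. unit_seq j = (\<lambda>m. \<Sum>i<N. a i * f i m)"
begin

lemma coordinate_expansion:
  assumes N: "unit_seq j = (\<lambda>m. \<Sum>i<N. a i * f i m)"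
  shows "\<And>k. N \<le> k \<Longrightarrow> u k j = 0" and "x j = (\<Sum>i<N. u i j * pairing (f i) x)"
proof -
  have pairing_N: "\<And>y. pairing (unit_seq j) y = (\<Sum>i<N. a i * pairing (f i) y)"
    by (subst N) (rule pairing_lincomb_left, rule f_in_finite_seqs)
  have u_col: "u k j = (\<Sum>i<N. a i * (if i = k then 1 else 0))" for k
    using pairing_N[of "u k"] by (simp add: biorth)
  then show "\<And>k. N \<le> k \<Longrightarrow> u k j = 0" by (auto intro: sum.neutral)
  have "a i = u i j" if "i < N" for i
    using u_col[of i] sum_times_delta[OF that, of a] by (simp add: eq_commute)
  then show "x j = (\<Sum>i<N. u i j * pairing (f i) x)"
    using pairing_N[of x] by (auto intro: sum.cong)
qed

definition column_bound :: "nat \<Rightarrow> nat" where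
  "column_bound j = (SOME N. \<exists>a. unit_seq j = (\<lambda>m. \<Sum>i<N. a i * f i m))"

lemma column_bound: "\<exists>a. unit_seq j = (\<lambda>m. \<Sum>i<column_bound j. a i * f i m)"
  unfolding column_bound_def using unit_seq_lincomb by (rule someI_ex)

lemma u_column_vanishes: "column_bound j \<le> k \<Longrightarrow> u k j = 0"
  using column_bound coordinate_expansion(1) by blast

lemma reconstruction: "x j = (\<Sum>i<column_bound j. u i j * pairing (f i) x)"
  using column_bound coordinate_expansion(2) by blast

definition coord :: "(nat \<Rightarrow> 'a) \<Rightarrow> nat \<Rightarrow> 'a" where
  "coord x = (\<lambda>i. pairing (f i) x)"

definition synth :: "(nat \<Rightarrow> 'a) \<Rightarrow> nat \<Rightarrow> 'a" where
  "synth y = (\<lambda>j. \<Sum>i<column_bound j. u i j * y i)"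

lemma synth_coord: "synth (coord x) = x"
  by (simp add: synth_def coord_def fun_eq_iff reconstruction[symmetric])

lemma synth_eq_sum:
  assumes "finite T" "\<And>i. i \<notin> T \<Longrightarrow> y i = 0"
  shows "synth y = (\<Sum>i\<in>T. wsmul (y i) (u i))"
proof
  fix j
  have "synth y j = (\<Sum>i\<in>{..<column_bound j} \<union> T. u i j * y i)"
    unfolding synth_def by (rule sum.mono_neutral_left) (auto simp: assms u_column_vanishes not_less)
  also have "\<dots> = (\<Sum>i\<in>T. u i j * y i)"
    by (rule sum.mono_neutral_right) (auto simp: assms)
  finally show "synth y j = (\<Sum>i\<in>T. wsmul (y i) (u i)) j"
    by (simp add: sum_fun_apply wsmul_def mult.commute)
qed

text \<open>The synthesis is also a right inverse: the n-th coordinate only involves the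
  finitely many columns in the support of f n, so biorthogonality applies.\<close>

lemma coord_synth: "coord (synth y) = y"
proof
  fix n
  let ?S = "fsupp (f n)"
  have S: "finite ?S" using f_in_finite_seqs by (simp add: finite_fsupp)
  obtain M0 where M0: "\<forall>m\<in>?S. column_bound m \<le> M0"
    using S finite_nat_set_iff_bounded_le[of "column_bound ` ?S"] by auto
  define M where "M = max M0 (Suc n)"
  have n: "n < M" by (simp add: M_def)
  have widen: "synth y m = (\<Sum>i<M. u i m * y i)" if "m \<in> ?S" for m
    unfolding synth_def
    by (rule sum.mono_neutral_left) (use M0 that in \<open>auto simp: M_def u_column_vanishes\<close>)
  have "coord (synth y) n = (\<Sum>m\<in>?S. \<Sum>i<M. y i * (f n m * u i m))"
    by (simp add: coord_def pairing_def widen sum_distrib_left mult_ac)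
  also have "\<dots> = (\<Sum>i<M. y i * pairing (f n) (u i))"
    by (subst sum.swap) (simp add: pairing_def sum_distrib_left)
  also have "\<dots> = y n"
    using sum_times_delta[OF n, of y] by (simp add: biorth)
  finally show "coord (synth y) n = y n" .
qed

lemma coord_u: "coord (u k) = unit_seq k"
  by (simp add: coord_def biorth unit_seq_def fun_eq_iff)

text \<open>The preimage of phi under the coordinate map is a subspace containing all u k,
  hence containing E.\<close>

lemma coord_E_subset: "coord ` E \<subseteq> finite_seqs"
proof -
  have "range u \<subseteq> {x. coord x \<in> finite_seqs}" by (auto simp: coord_u)
  moreover have "W.subspace {x. coord x \<in> finite_seqs}"
  proof (rule W.subspaceI)
    show "0 \<in> {x. coord x \<in> finite_seqs}"
      by (simp add: coord_def finite_seqs_def fsupp_def)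
    show "x + y \<in> {x. coord x \<in> finite_seqs}"
      if "x \<in> {x. coord x \<in> finite_seqs}" "y \<in> {x. coord x \<in> finite_seqs}" for x y
      using that finite_seqs_add by (simp add: coord_def plus_fun_def pairing_add_right)
    show "wsmul c x \<in> {x. coord x \<in> finite_seqs}" if "x \<in> {x. coord x \<in> finite_seqs}" for c x
      using that finite_seqs_scale by (simp add: coord_def wsmul_def pairing_scale_right)
  qed
  ultimately have "W.span (range u) \<subseteq> {x. coord x \<in> finite_seqs}" by (rule W.span_minimal)
  then show ?thesis using E_subset_span by auto
qed

lemma finite_seqs_subset_coord_E: "finite_seqs \<subseteq> coord ` E"
proof
  fix y :: "nat \<Rightarrow> 'a" assume y: "y \<in> finite_seqs"
  have "synth y = (\<Sum>i\<in>fsupp y. wsmul (y i) (u i))"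
    using finite_fsupp[OF y] by (intro synth_eq_sum) (auto simp: fsupp_def)
  also have "\<dots> \<in> E" by (intro W.subspace_sum[OF subspace] W.subspace_scale[OF subspace] u_in_E)
  finally show "y \<in> coord ` E" using coord_synth by (metis image_eqI)
qed

lemma coord_in_GL_omega: "in_GL_omega coord"
proof (rule in_GL_omegaI[where K = synth])
  show "Vector_Spaces.linear wsmul wsmul coord"
    by (simp add: Vector_Spaces.linear_iff vector_space_wsmul coord_def plus_fun_def wsmul_def
        pairing_add_right pairing_scale_right fun_eq_iff)
  show "continuous_on UNIV coord"
    unfolding coord_def by (intro continuous_on_coordinatewise_then_product continuous_pairing)
  show "continuous_on UNIV synth"
    unfolding synth_def
    by (intro continuous_on_coordinatewise_then_product continuous_intros continuous_on_product_coordinates)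
qed (simp_all add: synth_coord coord_synth)

theorem GL_omega_onto_finite_seqs: "\<exists>J. in_GL_omega J \<and> J ` E = finite_seqs"
  using coord_in_GL_omega coord_E_subset finite_seqs_subset_coord_E by blast

end

section \<open>Gram-Schmidt steps relative to a finite biorthogonal family\<close>

definition residual :: "(nat \<Rightarrow> nat \<Rightarrow> 'a::field) \<Rightarrow> (nat \<Rightarrow> nat \<Rightarrow> 'a) \<Rightarrow> nat \<Rightarrow> (nat \<Rightarrow> 'a) \<Rightarrow> nat \<Rightarrow> 'a"
  where "residual U F n v = (\<lambda>j. v j - (\<Sum>i<n. pairing (F i) v * U i j))"

definition coresidual :: "(nat \<Rightarrow> nat \<Rightarrow> 'a::field) \<Rightarrow> (nat \<Rightarrow> nat \<Rightarrow> 'a) \<Rightarrow> nat \<Rightarrow> (nat \<Rightarrow> 'a) \<Rightarrow> nat \<Rightarrow> 'a"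
  where "coresidual U F n h = (\<lambda>j. h j - (\<Sum>i<n. pairing h (U i) * F i j))"

definition biorth_upto :: "(nat \<Rightarrow> 'a::field) set \<Rightarrow> (nat \<Rightarrow> nat \<Rightarrow> 'a) \<Rightarrow> (nat \<Rightarrow> nat \<Rightarrow> 'a) \<Rightarrow> nat \<Rightarrow> bool"
  where "biorth_upto E U F n \<longleftrightarrow> (\<forall>i<n. U i \<in> E \<and> F i \<in> finite_seqs) \<and>
     (\<forall>i<n. \<forall>k<n. pairing (F i) (U k) = (if i = k then 1 else 0))"

lemma biorth_upto_cong:
  "(\<And>i. i < n \<Longrightarrow> U i = U' i) \<Longrightarrow> (\<And>i. i < n \<Longrightarrow> F i = F' i) \<Longrightarrow> biorth_upto E U F n = biorth_upto E U' F' n"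
  by (simp add: biorth_upto_def)

lemma residual_cong:
  "(\<And>i. i < n \<Longrightarrow> U i = U' i) \<Longrightarrow> (\<And>i. i < n \<Longrightarrow> F i = F' i) \<Longrightarrow> residual U F n = residual U' F' n"
  unfolding residual_def by (intro ext) (auto intro!: sum.cong)

lemma coresidual_cong:
  "(\<And>i. i < n \<Longrightarrow> U i = U' i) \<Longrightarrow> (\<And>i. i < n \<Longrightarrow> F i = F' i) \<Longrightarrow> coresidual U F n = coresidual U' F' n"
  unfolding coresidual_def by (intro ext) (auto intro!: sum.cong)

lemma residual_in_subspace:
  "W.subspace E \<Longrightarrow> biorth_upto E U F n \<Longrightarrow> v \<in> E \<Longrightarrow> residual U F n v \<in> E"
  unfolding residual_def by (intro diff_in_subspace lincomb_in_subspace) (auto simp: biorth_upto_def)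

lemma coresidual_in_finite_seqs:
  "biorth_upto E U F n \<Longrightarrow> h \<in> finite_seqs \<Longrightarrow> coresidual U F n h \<in> finite_seqs"
  unfolding coresidual_def by (intro finite_seqs_diff finite_seqs_lincomb) (auto simp: biorth_upto_def)

lemma pairing_residual:
  assumes "\<And>i. i < n \<Longrightarrow> F i \<in> finite_seqs" "h \<in> finite_seqs"
  shows "pairing h (residual U F n v) = pairing (coresidual U F n h) v"
proof -
  have "pairing h (residual U F n v) = pairing h v - (\<Sum>i<n. pairing (F i) v * pairing h (U i))"
    unfolding residual_def by (simp add: pairing_diff_right pairing_lincomb_right)
  moreover have "pairing (coresidual U F n h) v = pairing h v - (\<Sum>i<n. pairing h (U i) * pairing (F i) v)"
    unfolding coresidual_def using assms by (simp add: pairing_diff_left finite_seqs_lincomb pairing_lincomb_left)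
  ultimately show ?thesis by (simp add: mult.commute)
qed

lemma pairing_F_residual:
  assumes "biorth_upto E U F n" "i < n" shows "pairing (F i) (residual U F n v) = 0"
proof -
  have "pairing (F i) (residual U F n v) = pairing (F i) v - (\<Sum>k<n. pairing (F k) v * pairing (F i) (U k))"
    unfolding residual_def by (simp add: pairing_diff_right pairing_lincomb_right)
  also have "\<dots> = pairing (F i) v - (\<Sum>k<n. pairing (F k) v * (if i = k then 1 else 0))"
    using assms by (simp add: biorth_upto_def)
  also have "\<dots> = 0" using assms(2) by (simp add: sum_times_delta)
  finally show ?thesis .
qed

lemma residual_U:
  assumes "biorth_upto E U F n" "i < n" shows "residual U F n (U i) = 0"
proof -
  have "(\<Sum>k<n. pairing (F k) (U i) * U k j) = U i j" for j
  proof -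
    have "(\<Sum>k<n. pairing (F k) (U i) * U k j) = (\<Sum>k<n. U k j * (if i = k then 1 else 0))"
      using assms by (intro sum.cong) (auto simp: biorth_upto_def)
    also have "\<dots> = U i j" using assms(2) by (rule sum_times_delta)
    finally show ?thesis .
  qed
  then show ?thesis by (simp add: residual_def fun_eq_iff)
qed

lemma residual_idem:
  assumes "biorth_upto E U F n" shows "residual U F n (residual U F n v) = residual U F n v"
  using pairing_F_residual[OF assms] by (simp add: residual_def[of U F n "residual U F n v"])

lemma biorth_upto_extend:
  assumes sub: "W.subspace E" and G: "biorth_upto E U F n" and v: "v \<in> E" and h: "h \<in> finite_seqs"
    and c: "pairing h (residual U F n v) \<noteq> 0"
  shows "biorth_upto E (U(n := residual U F n v))
           (F(n := (\<lambda>j. inverse (pairing h (residual U F n v)) * coresidual U F n h j))) (Suc n)"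
proof -
  let ?c = "pairing h (residual U F n v)"
  have F: "\<And>i. i < n \<Longrightarrow> F i \<in> finite_seqs" using G by (simp add: biorth_upto_def)
  have "pairing (coresidual U F n h) (residual U F n v) = ?c"
    using pairing_residual[of n F h U "residual U F n v", OF F h] residual_idem[OF G] by simp
  then have new_new: "pairing (\<lambda>j. inverse ?c * coresidual U F n h j) (residual U F n v) = 1"
    using c by (simp add: pairing_scale_left)
  have new_old: "pairing (\<lambda>j. inverse ?c * coresidual U F n h j) (U k) = 0" if "k < n" for k
    using pairing_residual[of n F h U "U k", OF F h] residual_U[OF G that] by (simp add: pairing_scale_left)
  have old_new: "pairing (F i) (residual U F n v) = 0" if "i < n" for i
    using pairing_F_residual[OF G that] .
  show ?thesis
    using G new_new new_old old_new residual_in_subspace[OF sub G v]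
      finite_seqs_scale[OF coresidual_in_finite_seqs[OF G h]]
    by (auto simp: biorth_upto_def less_Suc_eq)
qed

section \<open>Construction of a biorthogonal system by back-and-forth\<close>

locale dense_countable_basis =
  fixes E :: "(nat \<Rightarrow> 'a::real_normed_field) set" and B
  assumes dense: "closure E = UNIV" and independent: "\<not> W.dependent B"
    and span_B: "W.span B = E" and countable_B: "countable B" and infinite_B: "infinite B"
begin

lemma subspace: "W.subspace E"
  using W.subspace_span[of B] by (simp add: span_B)

lemma B_subset_E: "B \<subseteq> E"
  using W.span_superset[of B] by (simp add: span_B)

definition basis_seq :: "nat \<Rightarrow> nat \<Rightarrow> 'a" where
  "basis_seq = from_nat_into B"

lemma B_nonempty: "B \<noteq> {}"
  using infinite_B by auto

lemma basis_seq_in_E: "basis_seq k \<in> E"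
  using from_nat_into[OF B_nonempty] B_subset_E by (auto simp: basis_seq_def)

lemma range_basis_seq: "range basis_seq = B"
  using B_nonempty countable_B by (simp add: basis_seq_def)

text \<open>Infinite dimension: no finite family exhausts E.\<close>

lemma residual_nonzero_exists:
  assumes G: "biorth_upto E U F n" shows "\<exists>v\<in>E. residual U F n v \<noteq> 0"
proof (rule ccontr)
  assume "\<not> ?thesis"
  then have zero: "\<And>v. v \<in> E \<Longrightarrow> residual U F n v = 0" by auto
  have "E \<subseteq> W.span (U ` {..<n})"
  proof
    fix v assume v: "v \<in> E"
    have "v = (\<lambda>j. \<Sum>i<n. pairing (F i) v * U i j)"
      using zero[OF v] by (auto simp: residual_def fun_eq_iff)
    also have "\<dots> \<in> W.span (U ` {..<n})" by (intro lincomb_in_span W.span_base) auto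
    finally show "v \<in> W.span (U ` {..<n})" .
  qed
  then have "finite B"
    using B_subset_E W.independent_span_bound[of "U ` {..<n}" B] independent by auto
  then show False using infinite_B by simp
qed

text \<open>Density: a nonzero functional in phi does not vanish identically on E.\<close>

lemma dense_nonvanishing:
  assumes g: "g \<in> finite_seqs" "g \<noteq> 0" shows "\<exists>v\<in>E. pairing g v \<noteq> 0"
proof -
  obtain j where j: "g j \<noteq> 0" using g(2) by (auto simp: fun_eq_iff)
  let ?O = "{x. pairing g x \<noteq> 0}"
  have "open ?O" using continuous_pairing[of g] by (intro open_Collect_neq) auto
  moreover have "unit_seq j \<in> ?O" using j pairing_unit_seq_right[OF g(1)] by simp
  ultimately have "?O \<inter> E \<noteq> {}" using dense open_Int_closure_eq_empty by blast
  then show ?thesis by auto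
qed

text \<open>An admissible choice at stage n: a pair (v, h) performing a Gram-Schmidt step,
  which at even stages n = 2k absorbs the k-th basis vector and at odd stages n = 2k+1
  the k-th unit sequence, whenever these are not yet in the spans built so far.\<close>

definition admissible :: "(nat \<Rightarrow> nat \<Rightarrow> 'a) \<Rightarrow> (nat \<Rightarrow> nat \<Rightarrow> 'a) \<Rightarrow> nat \<Rightarrow> (nat \<Rightarrow> 'a) \<times> (nat \<Rightarrow> 'a) \<Rightarrow> bool" where
  "admissible U F n vh \<longleftrightarrow> fst vh \<in> E \<and> snd vh \<in> finite_seqs \<and>
     pairing (snd vh) (residual U F n (fst vh)) \<noteq> 0 \<and>
     (even n \<longrightarrow> residual U F n (basis_seq (n div 2)) \<noteq> 0 \<longrightarrow> fst vh = basis_seq (n div 2)) \<and>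
     (odd n \<longrightarrow> coresidual U F n (unit_seq (n div 2)) \<noteq> 0 \<longrightarrow> snd vh = unit_seq (n div 2))"

lemma admissible_exists:
  assumes G: "biorth_upto E U F n" shows "\<exists>vh. admissible U F n vh"
proof -
  have F: "\<And>i. i < n \<Longrightarrow> F i \<in> finite_seqs" using G by (simp add: biorth_upto_def)
  consider (basis) "even n" "residual U F n (basis_seq (n div 2)) \<noteq> 0"
    | (unit) "odd n" "coresidual U F n (unit_seq (n div 2)) \<noteq> 0"
    | (free) "\<not> (even n \<and> residual U F n (basis_seq (n div 2)) \<noteq> 0)"
      "\<not> (odd n \<and> coresidual U F n (unit_seq (n div 2)) \<noteq> 0)"
    by blast
  then show ?thesis
  proof cases
    case basis
    then obtain j where "residual U F n (basis_seq (n div 2)) j \<noteq> 0" by (auto simp: fun_eq_iff)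
    then have "admissible U F n (basis_seq (n div 2), unit_seq j)"
      using basis basis_seq_in_E by (simp add: admissible_def)
    then show ?thesis by blast
  next
    case unit
    have "coresidual U F n (unit_seq (n div 2)) \<in> finite_seqs"
      by (rule coresidual_in_finite_seqs[OF G]) simp
    then obtain v where v: "v \<in> E" "pairing (coresidual U F n (unit_seq (n div 2))) v \<noteq> 0"
      using dense_nonvanishing unit by blast
    then have "pairing (unit_seq (n div 2)) (residual U F n v) \<noteq> 0"
      using pairing_residual[of n F "unit_seq (n div 2)" U v, OF F] by simp
    then have "admissible U F n (v, unit_seq (n div 2))" using unit v by (simp add: admissible_def)
    then show ?thesis by blast
  next
    case free
    obtain v where v: "v \<in> E" "residual U F n v \<noteq> 0" using residual_nonzero_exists[OF G] by blast
    then obtain j where "residual U F n v j \<noteq> 0" by (auto simp: fun_eq_iff)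
    then have "admissible U F n (v, unit_seq j)" using free v by (auto simp: admissible_def)
    then show ?thesis by blast
  qed
qed

definition choice :: "(nat \<Rightarrow> nat \<Rightarrow> 'a) \<Rightarrow> (nat \<Rightarrow> nat \<Rightarrow> 'a) \<Rightarrow> nat \<Rightarrow> (nat \<Rightarrow> 'a) \<times> (nat \<Rightarrow> 'a)" where
  "choice U F n = (SOME vh. admissible U F n vh)"

lemma choice_admissible: "biorth_upto E U F n \<Longrightarrow> admissible U F n (choice U F n)"
  unfolding choice_def using admissible_exists by (rule someI_ex)

definition next_pair :: "(nat \<Rightarrow> nat \<Rightarrow> 'a) \<Rightarrow> (nat \<Rightarrow> nat \<Rightarrow> 'a) \<Rightarrow> nat \<Rightarrow> (nat \<Rightarrow> 'a) \<times> (nat \<Rightarrow> 'a)" where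
  "next_pair U F n = (let (v, h) = choice U F n in
     (residual U F n v, \<lambda>j. inverse (pairing h (residual U F n v)) * coresidual U F n h j))"

primrec stage :: "nat \<Rightarrow> (nat \<Rightarrow> nat \<Rightarrow> 'a) \<times> (nat \<Rightarrow> nat \<Rightarrow> 'a)" where
  "stage 0 = (\<lambda>_ _. 0, \<lambda>_ _. 0)"
| "stage (Suc n) = ((fst (stage n))(n := fst (next_pair (fst (stage n)) (snd (stage n)) n)),
                    (snd (stage n))(n := snd (next_pair (fst (stage n)) (snd (stage n)) n)))"

lemma stage_biorth_upto: "biorth_upto E (fst (stage n)) (snd (stage n)) n"
proof (induction n)
  case 0
  show ?case by (simp add: biorth_upto_def)
next
  case (Suc n)
  let ?U = "fst (stage n)" and ?F = "snd (stage n)"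
  have "admissible ?U ?F n (choice ?U ?F n)" by (rule choice_admissible[OF Suc])
  then show ?case
    using biorth_upto_extend[OF subspace Suc, of "fst (choice ?U ?F n)" "snd (choice ?U ?F n)"]
    by (simp add: admissible_def next_pair_def case_prod_beta fun_upd_def)
qed

text \<open>Entries are never changed once written, so the stages converge to sequences u, f.\<close>

lemma stage_stable: "k < n \<Longrightarrow> fst (stage n) k = fst (stage (Suc k)) k \<and> snd (stage n) k = snd (stage (Suc k)) k"
  by (induction n) (auto simp: less_Suc_eq)

definition u :: "nat \<Rightarrow> nat \<Rightarrow> 'a" where "u k = fst (stage (Suc k)) k"
definition f :: "nat \<Rightarrow> nat \<Rightarrow> 'a" where "f k = snd (stage (Suc k)) k"

lemma stage_eq: "i < n \<Longrightarrow> fst (stage n) i = u i" "i < n \<Longrightarrow> snd (stage n) i = f i"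
  using stage_stable by (simp_all add: u_def f_def)

lemma biorth_upto_uf: "biorth_upto E u f n"
  using stage_biorth_upto[of n] biorth_upto_cong[of n "fst (stage n)" u "snd (stage n)" f E] stage_eq
  by simp

lemma residual_uf: "residual (fst (stage n)) (snd (stage n)) n = residual u f n"
  and coresidual_uf: "coresidual (fst (stage n)) (snd (stage n)) n = coresidual u f n"
  by (intro residual_cong coresidual_cong stage_eq; assumption)+

lemma next_pair_uf:
  "u n = residual u f n (fst (choice (fst (stage n)) (snd (stage n)) n))"
  "f n = (\<lambda>j. inverse (pairing (snd (choice (fst (stage n)) (snd (stage n)) n))
                 (residual u f n (fst (choice (fst (stage n)) (snd (stage n)) n)))) *
             coresidual u f n (snd (choice (fst (stage n)) (snd (stage n)) n)) j)"
  by (simp_all add: u_def f_def next_pair_def case_prod_beta residual_uf coresidual_uf)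

lemma choice_uf: "admissible u f n (choice (fst (stage n)) (snd (stage n)) n)"
  using choice_admissible[OF stage_biorth_upto, of n]
  by (simp add: admissible_def residual_uf coresidual_uf)

text \<open>Each basis vector b k is in the span of u: at stage 2k either its residual already
  vanishes, or b k was chosen and its residual became u (2k).\<close>

lemma basis_seq_in_span: "basis_seq k \<in> W.span (range u)"
proof -
  define n where "n = 2 * k"
  have n: "even n" "n div 2 = k" by (simp_all add: n_def)
  let ?r = "residual u f n (basis_seq k)"
  have proj: "(\<lambda>j. \<Sum>i<n. pairing (f i) (basis_seq k) * u i j) \<in> W.span (range u)"
    by (intro lincomb_in_span W.span_base) auto
  have "?r \<in> W.span (range u)"
  proof (cases "?r = 0")
    case False
    then have "u n = ?r" using choice_uf[of n] next_pair_uf(1)[of n] n by (simp add: admissible_def)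
    then show ?thesis by (metis W.span_base rangeI)
  qed (simp add: W.span_zero)
  then have "(\<lambda>j. ?r j + (\<Sum>i<n. pairing (f i) (basis_seq k) * u i j)) \<in> W.span (range u)"
    using W.span_add[OF _ proj] by (simp add: plus_fun_def)
  then show ?thesis by (simp add: residual_def)
qed

lemma E_subset_span: "E \<subseteq> W.span (range u)"
  using basis_seq_in_span span_B range_basis_seq W.span_minimal[of "range basis_seq"]
  by (metis W.subspace_span image_subsetI)

text \<open>Dually, each unit sequence \<delta>_k is a combination of f 0, ..., f (2k+1): at stage 2k+1
  either its coresidual already vanishes, or \<delta>_k was chosen and its normalised
  coresidual became f (2k+1).\<close>

lemma unit_seq_lincomb: "\<exists>N a. unit_seq k = (\<lambda>j. \<Sum>i<N. a i * f i j)"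
proof -
  define n where "n = Suc (2 * k)"
  have n: "odd n" "n div 2 = k" by (simp_all add: n_def)
  let ?s = "coresidual u f n (unit_seq k)"
  have decomp: "unit_seq k j = ?s j + (\<Sum>i<n. pairing (unit_seq k) (u i) * f i j)" for j
    by (simp add: coresidual_def)
  show ?thesis
  proof (cases "?s = 0")
    case True
    then have "unit_seq k = (\<lambda>j. \<Sum>i<n. pairing (unit_seq k) (u i) * f i j)"
      using decomp by (simp add: fun_eq_iff)
    then show ?thesis by (intro exI)
  next
    case False
    let ?vh = "choice (fst (stage n)) (snd (stage n)) n"
    define c where "c = pairing (snd ?vh) (residual u f n (fst ?vh))"
    have adm: "admissible u f n ?vh" by (rule choice_uf)
    then have "c \<noteq> 0" by (simp add: admissible_def c_def)
    moreover have h: "snd ?vh = unit_seq k" using adm False n by (simp add: admissible_def)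
    ultimately have f_n: "c * f n j = ?s j" for j
      using next_pair_uf(2)[of n, folded c_def] by simp
    define a where "a = (\<lambda>i. if i = n then c else pairing (unit_seq k) (u i))"
    have "unit_seq k j = (\<Sum>i<Suc n. a i * f i j)" for j
    proof -
      have "(\<Sum>i<n. a i * f i j) = (\<Sum>i<n. pairing (unit_seq k) (u i) * f i j)"
        by (rule sum.cong) (auto simp: a_def)
      then show ?thesis using decomp[of j] f_n[of j] by (simp add: a_def)
    qed
    then show ?thesis by (intro exI ext)
  qed
qed

lemma biorthogonal_system_uf: "biorthogonal_system E u f"
proof (rule biorthogonal_system.intro)
  show "u k \<in> E" "f k \<in> finite_seqs" for k
    using biorth_upto_uf[of "Suc k"] by (auto simp: biorth_upto_def)
  show "pairing (f i) (u k) = (if i = k then 1 else 0)" for i k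
    using biorth_upto_uf[of "Suc (max i k)"] by (simp add: biorth_upto_def less_Suc_eq_le)
qed (fact subspace E_subset_span unit_seq_lincomb)+

end

lemma dense_countable_dim_onto_finite_seqs:
  fixes E :: "(nat \<Rightarrow> 'a::real_normed_field) set"
  assumes "dense_countable_dim_subspace E"
  shows "\<exists>J. in_GL_omega J \<and> J ` E = finite_seqs"
proof -
  obtain B where "dense_countable_basis E B"
    using assms unfolding dense_countable_dim_subspace_def by (auto intro: dense_countable_basis.intro)
  then interpret dense_countable_basis E B .
  interpret biorthogonal_system E u f by (rule biorthogonal_system_uf)
  show ?thesis by (rule GL_omega_onto_finite_seqs)
qed

lemma GL_omega_transitive:
  fixes E F :: "(nat \<Rightarrow> 'a::real_normed_field) set"
  assumes "dense_countable_dim_subspace E" "dense_countable_dim_subspace F"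
  shows "\<exists>J. in_GL_omega J \<and> J ` E = F"
proof -
  obtain J1 where J1: "in_GL_omega J1" "J1 ` E = finite_seqs"
    using dense_countable_dim_onto_finite_seqs[OF assms(1)] by blast
  obtain J2 where J2: "in_GL_omega J2" "J2 ` F = finite_seqs"
    using dense_countable_dim_onto_finite_seqs[OF assms(2)] by blast
  have "(inv J2 \<circ> J1) ` E = inv J2 ` J2 ` F" by (simp only: image_comp[symmetric] J1 J2)
  also have "\<dots> = F" using J2(1) by (simp add: in_GL_omega_def bij_is_inj image_inv_f_f)
  finally show ?thesis using in_GL_omega_comp[OF J1(1) in_GL_omega_inv[OF J2(1)]] by blast
qed

theorem theorem3p1:
  shows "(\<forall>E F :: (nat \<Rightarrow> real) set.
            dense_countable_dim_subspace E \<and> dense_countable_dim_subspace F \<longrightarrow>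
            (\<exists>J. in_GL_omega J \<and> J ` E = F)) \<and>
         (\<forall>E F :: (nat \<Rightarrow> complex) set.
            dense_countable_dim_subspace E \<and> dense_countable_dim_subspace F \<longrightarrow>
            (\<exists>J. in_GL_omega J \<and> J ` E = F))"
  by (intro conjI allI impI; elim conjE; rule GL_omega_transitive)

end
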